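(* Under the standing assumptions, suppose in addition that $J$ is absolutely $p$-homogeneous. If $u$ is a $p$-eigenvector of $J$ with subgradient $\zeta$ and eigenvalue $\lambda$, then $|\zeta|_{H^*}\le|\tilde\zeta|_{H^*}$ for every $\tilde\zeta\in\partial J(u)$.
   Context: Standing assumptions: $X$ is a real reflexive Banach space with dual $X^*$ and duality pairing $\langle\cdot,\cdot\rangle$; $\Gamma_0(X)$ is the class of proper, lower semi-continuous, convex functionals $X\to\mathbb{R}\cup\{+\infty\}$. Fix $1<p<\infty$. Let $J\in\Gamma_0(X)$, and let $H\in\Gamma_0(X)$ be absolutely $p$-homogeneous ($H(tu)=|t|^pH(u)$) such that $|u|_H:=(pH(u))^{1/p}$ is a norm on $X$, so $H(u)=\frac1p|u|_H^p$. The dual norm is $|\zeta|_{H^*}=\sup_{u\ne0}\langle\zeta,u\rangle/|u|_H$. The subdifferential is $\partial J(u)=\{\zeta\in X^*:\ J(u)+\langle\zeta,v-u\rangle\le J(v)\ \forall v\in X\}$. Growth assumption: there is $c>0$ with $H(u)\le cJ(u)$ for all $u\in X$. The Rayleigh quotient is $R(u)=J(u)/H(u)$ for $u\ne0$. A $p$-eigenvector of $J$: $u\in X\setminus\{0\}$ with subgradient $\zeta\in\partial J(u)$ and eigenvalue $\lambda=R(u)\in\mathbb{R}$ such that $\zeta\in\lambda\,\partial H(u)$. *)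

theory Defs
  imports "HOL-Analysis.Analysis"
begin

text \<open>Functionals X \<rightarrow> \<real> \<union> {+\<infinity>} are modelled as maps into ereal that never take the value -\<infinity>.
  The dual space X* is the space of bounded linear functionals 'a =>L real; the duality
  pairing is function application.\<close>

definition reflexive_space :: "'a::banach itself \<Rightarrow> bool" where
  "reflexive_space _ \<longleftrightarrow>
     (\<forall>\<phi> :: ('a \<Rightarrow>\<^sub>L real) \<Rightarrow>\<^sub>L real. \<exists>x::'a. \<forall>\<zeta>. blinfun_apply \<phi> \<zeta> = blinfun_apply \<zeta> x)"

definition proper_fun :: "('a \<Rightarrow> ereal) \<Rightarrow> bool" where
  "proper_fun J \<longleftrightarrow> (\<forall>u. J u \<noteq> -\<infinity>) \<and> (\<exists>u. J u \<noteq> \<infinity>)"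

definition lsc_fun :: "('a::topological_space \<Rightarrow> ereal) \<Rightarrow> bool" where
  "lsc_fun J \<longleftrightarrow> (\<forall>r::real. closed {u. J u \<le> ereal r})"

definition convex_fun :: "('a::real_vector \<Rightarrow> ereal) \<Rightarrow> bool" where
  "convex_fun J \<longleftrightarrow> (\<forall>u v. \<forall>t::real. 0 \<le> t \<and> t \<le> 1 \<longrightarrow>
      J ((1 - t) *\<^sub>R u + t *\<^sub>R v) \<le> ereal (1 - t) * J u + ereal t * J v)"

definition Gamma0 :: "('a::real_normed_vector \<Rightarrow> ereal) \<Rightarrow> bool" where
  "Gamma0 J \<longleftrightarrow> proper_fun J \<and> lsc_fun J \<and> convex_fun J"

definition abs_p_homogeneous :: "real \<Rightarrow> ('a::real_vector \<Rightarrow> ereal) \<Rightarrow> bool" where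
  "abs_p_homogeneous p J \<longleftrightarrow> (\<forall>t u. J (t *\<^sub>R u) = ereal (\<bar>t\<bar> powr p) * J u)"

definition is_norm :: "('a::real_vector \<Rightarrow> real) \<Rightarrow> bool" where
  "is_norm N \<longleftrightarrow> (\<forall>u. 0 \<le> N u) \<and> (\<forall>u. N u = 0 \<longleftrightarrow> u = 0)
     \<and> (\<forall>c u. N (c *\<^sub>R u) = \<bar>c\<bar> * N u) \<and> (\<forall>u v. N (u + v) \<le> N u + N v)"

definition Hnorm :: "real \<Rightarrow> ('a \<Rightarrow> ereal) \<Rightarrow> 'a \<Rightarrow> real" where
  "Hnorm p H u = (p * real_of_ereal (H u)) powr (1 / p)"

definition dual_Hnorm :: "real \<Rightarrow> ('a::real_normed_vector \<Rightarrow> ereal) \<Rightarrow> ('a \<Rightarrow>\<^sub>L real) \<Rightarrow> ereal" where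
  "dual_Hnorm p H \<zeta> = (SUP u \<in> - {0}. ereal (blinfun_apply \<zeta> u / Hnorm p H u))"

definition subdiff :: "('a::real_normed_vector \<Rightarrow> ereal) \<Rightarrow> 'a \<Rightarrow> ('a \<Rightarrow>\<^sub>L real) set" where
  "subdiff J u = {\<zeta>. \<forall>v. J u + ereal (blinfun_apply \<zeta> (v - u)) \<le> J v}"

definition rayleigh :: "('a \<Rightarrow> ereal) \<Rightarrow> ('a \<Rightarrow> ereal) \<Rightarrow> 'a \<Rightarrow> ereal" where
  "rayleigh J H u = J u / H u"

definition p_eigenvector ::
  "('a::real_normed_vector \<Rightarrow> ereal) \<Rightarrow> ('a \<Rightarrow> ereal) \<Rightarrow> 'a \<Rightarrow> ('a \<Rightarrow>\<^sub>L real) \<Rightarrow> real \<Rightarrow> bool" where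
  "p_eigenvector J H u \<zeta> lam \<longleftrightarrow> u \<noteq> 0 \<and> \<zeta> \<in> subdiff J u \<and> ereal lam = rayleigh J H u
     \<and> (\<exists>\<eta> \<in> subdiff H u. \<zeta> = lam *\<^sub>R \<eta>)"

end

theory Submission imports Defs begin

text \<open>Euler's identity for a p-homogeneous J gives \<open>\<langle>\<xi>, u\<rangle> = p J(u)\<close> for every
  \<open>\<xi> \<in> \<partial>J(u)\<close>, so all subgradients at u agree at u and every one of them has dual norm at
  least \<open>p J(u) / |u|\<^sub>H\<close>. For \<open>\<zeta> = \<lambda> \<eta>\<close> with \<open>\<eta> \<in> \<partial>H(u)\<close> and \<open>\<lambda> \<ge> 0\<close> this bound is attained:
  H is constant on the sphere of radius \<open>|u|\<^sub>H\<close>, so the subgradient inequality of \<eta> shows that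
  \<open>\<langle>\<eta>, v\<rangle> / |v|\<^sub>H\<close> is maximal at \<open>v = u\<close>.\<close>

lemma abs_p_homogeneous_zero:
  assumes "abs_p_homogeneous p F" "0 < p"
  shows "F 0 = 0"
proof -
  have "F (0 *\<^sub>R 0) = ereal (\<bar>0\<bar> powr p) * F 0"
    using assms(1) unfolding abs_p_homogeneous_def by blast
  then show ?thesis by (simp add: zero_ereal_def[symmetric])
qed

lemma abs_p_homogeneous_convex_nonneg:
  fixes F :: "'a::real_vector \<Rightarrow> ereal"
  assumes "\<forall>v. F v \<noteq> -\<infinity>" "convex_fun F" "abs_p_homogeneous p F" "0 < p"
  shows "0 \<le> F v"
proof -
  have "F ((-1) *\<^sub>R v) = ereal (\<bar>-1\<bar> powr p) * F v"
    using assms(3) unfolding abs_p_homogeneous_def by blast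
  then have even: "F (-v) = F v" by simp
  have "F ((1 - 1/2) *\<^sub>R v + (1/2) *\<^sub>R (-v)) \<le> ereal (1 - 1/2) * F v + ereal (1/2) * F (-v)"
    using assms(2)[unfolded convex_fun_def, rule_format, of "1/2" v "-v"] by simp
  then have "0 \<le> ereal (1/2) * F v + ereal (1/2) * F v"
    using abs_p_homogeneous_zero[OF assms(3,4)] even by (simp add: algebra_simps)
  then show ?thesis using assms(1) by (cases "F v") auto
qed

lemma subdiff_abs_p_homogeneous_apply_self:
  fixes F :: "'a::real_normed_vector \<Rightarrow> ereal"
  assumes "abs_p_homogeneous p F" "\<xi> \<in> subdiff F u" "F u = ereal j"
  shows "blinfun_apply \<xi> u = p * j"
proof -
  define g where "g t = (t powr p - 1) * j - (t - 1) * blinfun_apply \<xi> u" for t :: real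
  have min: "g 1 \<le> g t" if "\<bar>1 - t\<bar> < 1" for t
  proof -
    have "F u + ereal (blinfun_apply \<xi> (t *\<^sub>R u - u)) \<le> F (t *\<^sub>R u)"
      using assms(2) unfolding subdiff_def by blast
    also have "F (t *\<^sub>R u) = ereal (t powr p * j)"
      using assms(1,3) that unfolding abs_p_homogeneous_def by simp
    finally show ?thesis
      using assms(3) by (simp add: g_def blinfun.diff_right blinfun.scaleR_right algebra_simps)
  qed
  have deriv: "(g has_real_derivative p * j - blinfun_apply \<xi> u) (at 1)"
    unfolding g_def by (auto intro!: derivative_eq_intros)
  have "p * j - blinfun_apply \<xi> u = 0"
    using DERIV_local_min[OF deriv zero_less_one] min by blast
  then show ?thesis by simp
qed

lemma Hnorm_powr:
  assumes "0 < p" "0 \<le> H v" "H v \<noteq> \<infinity>"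
  shows "H v = ereal (Hnorm p H v powr p / p)"
proof -
  have "0 \<le> real_of_ereal (H v)" using assms(2) by (simp add: real_of_ereal_pos)
  then have "Hnorm p H v powr p = p * real_of_ereal (H v)"
    using assms(1) unfolding Hnorm_def by (simp add: powr_powr)
  then show ?thesis using assms by (cases "H v") auto
qed

lemma Hnorm_eq_imp_eq:
  assumes "0 < p" "\<And>v. 0 \<le> H v" "\<And>v. H v \<noteq> \<infinity>" "Hnorm p H v = Hnorm p H w"
  shows "H v = H w"
proof -
  have "H v = ereal (Hnorm p H v powr p / p)"
    by (rule Hnorm_powr) (use assms in auto)
  also have "\<dots> = ereal (Hnorm p H w powr p / p)"
    using assms(4) by (simp only:)
  also have "\<dots> = H w"
    by (rule Hnorm_powr[symmetric]) (use assms in auto)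
  finally show ?thesis .
qed

lemma subdiff_ratio_maximal:
  fixes F :: "'a::real_normed_vector \<Rightarrow> ereal" and N :: "'a \<Rightarrow> real"
  assumes "is_norm N" and radial: "\<And>v w. N v = N w \<Longrightarrow> F v = F w"
    and "\<bar>F u\<bar> \<noteq> \<infinity>" "\<xi> \<in> subdiff F u" "u \<noteq> 0" "v \<noteq> 0"
  shows "blinfun_apply \<xi> v / N v \<le> blinfun_apply \<xi> u / N u"
proof -
  have N_pos: "N x > 0" if "x \<noteq> 0" for x
    using assms(1) that unfolding is_norm_def by (metis order_le_less)
  have Nu: "N u > 0" and Nv: "N v > 0" using N_pos assms(5,6) by auto
  define w where "w = (N u / N v) *\<^sub>R v"
  have "N w = \<bar>N u / N v\<bar> * N v"
    using assms(1) unfolding w_def is_norm_def by blast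
  then have "N w = N u" using Nu Nv by simp
  have "F u + ereal (blinfun_apply \<xi> (w - u)) \<le> F w"
    using assms(4) unfolding subdiff_def by blast
  then have "F u + ereal (blinfun_apply \<xi> (w - u)) \<le> F u"
    using radial[OF \<open>N w = N u\<close>] by simp
  then have "blinfun_apply \<xi> (w - u) \<le> 0"
    using assms(3) by (cases "F u") auto
  then have "(N u / N v) * blinfun_apply \<xi> v \<le> blinfun_apply \<xi> u"
    unfolding w_def by (simp add: blinfun.diff_right blinfun.scaleR_right)
  then show ?thesis using Nu Nv by (simp add: field_simps)
qed

lemma dual_Hnorm_ge:
  assumes "u \<noteq> 0"
  shows "ereal (blinfun_apply \<zeta> u / Hnorm p H u) \<le> dual_Hnorm p H \<zeta>"
  unfolding dual_Hnorm_def using assms by (intro SUP_upper) auto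

lemma dual_Hnorm_eq_if_maximal:
  assumes "u \<noteq> 0"
    and "\<And>v. v \<noteq> 0 \<Longrightarrow> blinfun_apply \<zeta> v / Hnorm p H v \<le> blinfun_apply \<zeta> u / Hnorm p H u"
  shows "dual_Hnorm p H \<zeta> = ereal (blinfun_apply \<zeta> u / Hnorm p H u)"
  using dual_Hnorm_ge[OF assms(1)] assms(2) unfolding dual_Hnorm_def
  by (intro antisym SUP_least) auto

theorem mainTheorem5:
  fixes J H :: "'a::banach \<Rightarrow> ereal" and p c lam :: real and u :: 'a and \<zeta> \<zeta>' :: "'a \<Rightarrow>\<^sub>L real"
  assumes refl: "reflexive_space TYPE('a)"
    and p: "1 < p"
    and J: "Gamma0 J" and H: "Gamma0 H"
    and Hhom: "abs_p_homogeneous p H"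
    and Hfin: "\<forall>v. H v \<noteq> \<infinity>"
    and Hnorm: "is_norm (Hnorm p H)"
    and growth: "0 < c" "\<forall>v. H v \<le> ereal c * J v"
    and Jhom: "abs_p_homogeneous p J"
    and eig: "p_eigenvector J H u \<zeta> lam"
    and sub: "\<zeta>' \<in> subdiff J u"
  shows "dual_Hnorm p H \<zeta> \<le> dual_Hnorm p H \<zeta>'"
proof -
  let ?N = "Hnorm p H"
  have p0: "0 < p" using p by simp
  have Hnn: "0 \<le> H v" and Jnn: "0 \<le> J v" for v
    using H J Hhom Jhom p0 abs_p_homogeneous_convex_nonneg
    unfolding Gamma0_def proper_fun_def by blast+
  obtain \<eta> where u0: "u \<noteq> 0" and zs: "\<zeta> \<in> subdiff J u" and lamR: "ereal lam = J u / H u"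
    and es: "\<eta> \<in> subdiff H u" and ze: "\<zeta> = lam *\<^sub>R \<eta>"
    using eig unfolding p_eigenvector_def rayleigh_def by blast
  have "?N u > 0" using Hnorm u0 unfolding is_norm_def by (metis order_le_neq_trans)
  moreover have "H u = ereal (?N u powr p / p)"
    using Hnorm_powr[of p H u] p0 Hnn[of u] Hfin by blast
  ultimately obtain h where Hu: "H u = ereal h" "0 < h" using p0 by auto
  obtain j where Ju: "J u = ereal j"
    using lamR Jnn[of u] Hu by (cases "J u") auto
  have lam0: "0 \<le> lam"
    using lamR Jnn[of u] Hu Ju by (simp add: divide_ereal_def)
  have "blinfun_apply \<zeta> v / ?N v \<le> blinfun_apply \<zeta> u / ?N u" if "v \<noteq> 0" for v
    using mult_left_mono[OF subdiff_ratio_maximal[OF Hnorm Hnorm_eq_imp_eq[OF p0 Hnn Hfin[rule_format]] _ es u0 that] lam0]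
    by (simp add: ze Hu scaleR_blinfun.rep_eq)
  then have "dual_Hnorm p H \<zeta> = ereal (blinfun_apply \<zeta> u / ?N u)"
    by (rule dual_Hnorm_eq_if_maximal[OF u0])
  also have "blinfun_apply \<zeta> u = blinfun_apply \<zeta>' u"
    using subdiff_abs_p_homogeneous_apply_self[OF Jhom _ Ju] zs sub by simp
  also have "ereal (blinfun_apply \<zeta>' u / ?N u) \<le> dual_Hnorm p H \<zeta>'"
    by (rule dual_Hnorm_ge[OF u0])
  finally show ?thesis .
qed

end
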